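(* Let $X$ and $Y$ be $n$-dimensional compacta, $n\geq 1$. If $H^n(X)\neq 0$, then there is an $\varepsilon>0$ such that every $\varepsilon$-mapping $f:X\to Y$ satisfies $H^n(f)\neq 0$, where $H^n(f):H^n(Y)\to H^n(X)$ is the induced homomorphism.
   Context: A compactum is a compact metric space; all maps are continuous. $H^*(\cdot)$ denotes Čech cohomology with integer coefficients. A map $f:X\to Y$ from a metric space is an $\varepsilon$-mapping if $\operatorname{diam} f^{-1}(y)<\varepsilon$ for every $y\in f(X)$. *)

theory Defs
  imports "HOL-Analysis.Analysis"
begin

text \<open>Finite open covers of a space X, indexed by a finite set I of naturals.
  (For compacta, Cech cohomology may be computed from finite open covers.)\<close>
definition fin_open_cover :: "'a::metric_space set \<Rightarrow> nat set \<Rightarrow> (nat \<Rightarrow> 'a set) \<Rightarrow> bool" where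
  "fin_open_cover X I U \<longleftrightarrow> finite I \<and> (\<forall>i\<in>I. openin (top_of_set X) (U i)) \<and> (\<Union>i\<in>I. U i) = X"

definition refinement_map :: "nat set \<Rightarrow> (nat \<Rightarrow> 'a set) \<Rightarrow> nat set \<Rightarrow> (nat \<Rightarrow> 'a set) \<Rightarrow> (nat \<Rightarrow> nat) \<Rightarrow> bool" where
  "refinement_map J W I U lam \<longleftrightarrow> (\<forall>j\<in>J. lam j \<in> I \<and> W j \<subseteq> U (lam j))"

definition covdim_le :: "'a::metric_space set \<Rightarrow> nat \<Rightarrow> bool" where
  "covdim_le X n \<longleftrightarrow> (\<forall>I U. fin_open_cover X I U \<longrightarrow>
     (\<exists>J W lam. fin_open_cover X J W \<and> refinement_map J W I U lam \<and>
        (\<forall>x\<in>X. card {j\<in>J. x \<in> W j} \<le> Suc n)))"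

definition covdim_eq :: "'a::metric_space set \<Rightarrow> nat \<Rightarrow> bool" where
  "covdim_eq X n \<longleftrightarrow> covdim_le X n \<and> (n = 0 \<or> \<not> covdim_le X (n - 1))"

definition nerve_simplex :: "nat set \<Rightarrow> (nat \<Rightarrow> 'a set) \<Rightarrow> nat \<Rightarrow> nat list \<Rightarrow> bool" where
  "nerve_simplex I U k \<sigma> \<longleftrightarrow> length \<sigma> = Suc k \<and> set \<sigma> \<subseteq> I \<and> (\<Inter>i\<in>set \<sigma>. U i) \<noteq> {}"

definition cobdry :: "(nat list \<Rightarrow> int) \<Rightarrow> nat list \<Rightarrow> int" where
  "cobdry c \<sigma> = (\<Sum>j<length \<sigma>. (-1) ^ j * c (take j \<sigma> @ drop (Suc j) \<sigma>))"

definition is_cocycle :: "nat set \<Rightarrow> (nat \<Rightarrow> 'a set) \<Rightarrow> nat \<Rightarrow> (nat list \<Rightarrow> int) \<Rightarrow> bool" where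
  "is_cocycle I U k c \<longleftrightarrow> (\<forall>\<sigma>. nerve_simplex I U (Suc k) \<sigma> \<longrightarrow> cobdry c \<sigma> = 0)"

definition is_coboundary :: "nat set \<Rightarrow> (nat \<Rightarrow> 'a set) \<Rightarrow> nat \<Rightarrow> (nat list \<Rightarrow> int) \<Rightarrow> bool" where
  "is_coboundary I U k c \<longleftrightarrow>
     (if k = 0 then (\<forall>\<sigma>. nerve_simplex I U 0 \<sigma> \<longrightarrow> c \<sigma> = 0)
      else (\<exists>b. \<forall>\<sigma>. nerve_simplex I U k \<sigma> \<longrightarrow> cobdry b \<sigma> = c \<sigma>))"

text \<open>c is a k-cocycle on the nerve of the finite open cover (I,U) of X whose class
  in the Cech cohomology H^k(X) (the direct limit over refinements) is nonzero,
  i.e. it does not become a coboundary after pulling back to any refinement.\<close>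
definition cech_nonzero_class :: "'a::metric_space set \<Rightarrow> nat set \<Rightarrow> (nat \<Rightarrow> 'a set) \<Rightarrow> nat \<Rightarrow> (nat list \<Rightarrow> int) \<Rightarrow> bool" where
  "cech_nonzero_class X I U k c \<longleftrightarrow> fin_open_cover X I U \<and> is_cocycle I U k c \<and>
     (\<forall>J W lam. fin_open_cover X J W \<and> refinement_map J W I U lam \<longrightarrow>
        \<not> is_coboundary J W k (\<lambda>\<sigma>. c (map lam \<sigma>)))"

definition cech_nonzero :: "'a::metric_space set \<Rightarrow> nat \<Rightarrow> bool" where
  "cech_nonzero X k \<longleftrightarrow> (\<exists>I U c. cech_nonzero_class X I U k c)"

text \<open>The induced homomorphism H^k(f): H^k(Y) \<rightarrow> H^k(X) is nonzero: some class
  represented by a cocycle c on the nerve of a finite open cover V of Y is sent to a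
  nonzero class (represented by c on the nerve of the pulled-back cover).\<close>
definition cech_induced_nonzero :: "'a::metric_space set \<Rightarrow> 'b::metric_space set \<Rightarrow> ('a \<Rightarrow> 'b) \<Rightarrow> nat \<Rightarrow> bool" where
  "cech_induced_nonzero X Y f k \<longleftrightarrow>
     (\<exists>I V c. fin_open_cover Y I V \<and> is_cocycle I V k c \<and>
        cech_nonzero_class X I (\<lambda>i. f -` V i \<inter> X) k c)"

definition eps_mapping :: "real \<Rightarrow> 'a::metric_space set \<Rightarrow> ('a \<Rightarrow> 'b) \<Rightarrow> bool" where
  "eps_mapping \<epsilon> X f \<longleftrightarrow> (\<forall>y\<in>f ` X. diameter (f -` {y} \<inter> X) < \<epsilon>)"

end

theory Submission
  imports Defs
begin

text \<open>
  Let the class of H^n(X) be represented by an n-cocycle c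
  on the nerve of a finite open cover U of X, and let e be a Lebesgue number of U.
  For an e-mapping f the fibres of f are uniformly small, so there is an eta > 0
  such that points of X whose images are eta-close are e-close.  Since dim Y <= n,
  Y has a finite open cover W by sets of diameter < eta and of order <= n+1.
  Each preimage f^{-1}(W_j) then lies in some U_{kappa j}.  Pull c back along kappa
  and ALTERNATE it.  The alternated cochain vanishes on lists with repetitions, so
  it is a cocycle on the nerve of W (whose (n+1)-simplices all repeat a vertex);
  and alternation is chain homotopic to the identity on nerves, so on the nerve of
  f^{-1}(W) it still represents the (nonzero) pulled-back class.  Hence H^n(f) is
  nonzero on the class of this cocycle.
\<close>

subsection \<open>Faces and the coboundary\<close>

definition face :: "nat list \<Rightarrow> nat \<Rightarrow> nat list" where
  "face s j = take j s @ drop (Suc j) s"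

lemma cobdry_face: "cobdry c s = (\<Sum>j<length s. (-1) ^ j * c (face s j))"
  by (simp add: cobdry_def face_def)

lemma length_face: "j < length s \<Longrightarrow> length (face s j) = length s - 1"
  by (simp add: face_def)

lemma set_face_sub: "set (face s j) \<subseteq> set s"
  by (auto simp: face_def dest: in_set_takeD in_set_dropD)

lemma face_Cons_0: "face (x # t) 0 = t"
  by (simp add: face_def)

lemma face_Cons_Suc: "face (x # t) (Suc j) = x # face t j"
  by (simp add: face_def)

lemma face_append:
  "face (a @ b) k = (if k < length a then face a k @ b else a @ face b (k - length a))"
  by (auto simp: face_def Suc_diff_le)

lemma face_map: "face (map f s) j = map f (face s j)"
  by (simp add: face_def take_map drop_map)

lemma cobdry_map: "cobdry (\<lambda>s. c (map f s)) t = cobdry c (map f t)"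
  by (simp add: cobdry_face face_map)

lemma cobdry_diff: "cobdry (\<lambda>s. c s - d s) t = cobdry c t - cobdry d t"
  by (simp add: cobdry_face right_diff_distrib sum_subtractf)

lemma cobdry_add: "cobdry (\<lambda>s. c s + d s) t = cobdry c t + cobdry d t"
  by (simp add: cobdry_face distrib_left sum.distrib)

text \<open>Cone formula: the coboundary on v # t, in terms of the cochain restricted to
  simplices with first vertex v.  This drives all inductions on simplices below.\<close>
lemma cobdry_cone: "cobdry c (v # t) = c t - cobdry (\<lambda>u. c (v # u)) t"
proof -
  have "cobdry c (v # t) = (\<Sum>j<Suc (length t). (-1) ^ j * c (face (v # t) j))"
    by (simp add: cobdry_face)
  also have "\<dots> = c t + (\<Sum>j<length t. (-1) ^ Suc j * c (face (v # t) (Suc j)))"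
    by (simp only: sum.lessThan_Suc_shift) (simp add: face_Cons_0)
  also have "\<dots> = c t - cobdry (\<lambda>u. c (v # u)) t"
    by (simp add: cobdry_face face_Cons_Suc sum_negf)
  finally show ?thesis .
qed

lemma cobdry_cobdry: "cobdry (cobdry c) t = 0"
proof (induction t arbitrary: c)
  case Nil
  then show ?case by (simp add: cobdry_def)
next
  case (Cons v t)
  have "cobdry (cobdry c) (v # t) = cobdry c t - cobdry (\<lambda>u. cobdry c (v # u)) t"
    by (rule cobdry_cone)
  also have "(\<lambda>u. cobdry c (v # u)) = (\<lambda>u. c u - cobdry (\<lambda>w. c (v # w)) u)"
    by (simp add: cobdry_cone)
  also have "cobdry c t - cobdry \<dots> t = cobdry (cobdry (\<lambda>w. c (v # w))) t"
    by (simp add: cobdry_diff)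
  also have "\<dots> = 0"
    by (rule Cons.IH)
  finally show ?case .
qed

lemma sum_lessThan_add:
  fixes f :: "nat \<Rightarrow> int"
  shows "(\<Sum>k<r + m. f k) = (\<Sum>k<r. f k) + (\<Sum>i<m. f (r + i))"
  by (induction m) auto

lemma sum_lessThan_add_Suc:
  fixes f :: "nat \<Rightarrow> int"
  shows "(\<Sum>k<r + Suc m. f k) = (\<Sum>k<r. f k) + f r + (\<Sum>i<m. f (r + Suc i))"
proof -
  have "(\<Sum>k<r + Suc m. f k) = (\<Sum>k<r. f k) + (\<Sum>i<Suc m. f (r + i))"
    by (rule sum_lessThan_add)
  also have "(\<Sum>i<Suc m. f (r + i)) = f r + (\<Sum>i<m. f (r + Suc i))"
    by (simp only: sum.lessThan_Suc_shift) simp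
  finally show ?thesis by simp
qed

lemma cobdry_mid:
  "cobdry d (a @ x # b) = (\<Sum>k<length a. (-1) ^ k * d (face a k @ x # b))
     + (-1) ^ length a * d (a @ b)
     + (\<Sum>i<length b. (-1) ^ (length a + Suc i) * d (a @ x # face b i))"
proof -
  have "cobdry d (a @ x # b)
      = (\<Sum>k<length a + Suc (length b). (-1) ^ k * d (face (a @ x # b) k))"
    by (simp add: cobdry_face)
  then show ?thesis
    unfolding sum_lessThan_add_Suc by (simp add: face_append face_Cons_0 face_Cons_Suc)
qed

lemma cobdry_append:
  "cobdry d (a @ b) = (\<Sum>k<length a. (-1) ^ k * d (face a k @ b))
     + (\<Sum>i<length b. (-1) ^ (length a + i) * d (a @ face b i))"
  by (simp add: cobdry_face sum_lessThan_add face_append)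

subsection \<open>Alternation\<close>

text \<open>Number of inversions of a list; (-1) to this power is the sign of the
  permutation sorting a list of distinct numbers.\<close>
fun inversions :: "nat list \<Rightarrow> nat" where
  "inversions [] = 0"
| "inversions (x # xs) = length (filter (\<lambda>y. y < x) xs) + inversions xs"

definition alt :: "(nat list \<Rightarrow> int) \<Rightarrow> nat list \<Rightarrow> int" where
  "alt d s = (if distinct s then (-1) ^ inversions s * d (sort s) else 0)"

text \<open>The cochain describing alt d on simplices with first vertex x.\<close>
definition alt_cons :: "nat \<Rightarrow> (nat list \<Rightarrow> int) \<Rightarrow> nat list \<Rightarrow> int" where
  "alt_cons x d t =
     (if x \<in> set t then 0 else (-1) ^ length (filter (\<lambda>y. y < x) t) * d (insort x t))"

lemma length_filter_sort: "length (filter P (sort t)) = length (filter P t)"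
  by (metis mset_filter mset_sort size_mset)

lemma alt_Cons: "alt d (x # t) = alt (alt_cons x d) t"
  by (auto simp: alt_def alt_cons_def length_filter_sort power_add)

lemma alt_diff: "alt (\<lambda>s. c s - d s) t = alt c t - alt d t"
  by (simp add: alt_def right_diff_distrib)

lemma insort_mid:
  assumes "\<forall>y\<in>set a. y < x" "\<forall>y\<in>set b. x < y"
  shows "insort x (a @ b) = a @ x # b"
  using assms
proof (induction a)
  case Nil
  then show ?case by (cases b) auto
next
  case (Cons y a)
  then show ?case by auto
qed

lemma alt_cons_mid:
  assumes a: "\<forall>y\<in>set a. y < x" and b: "\<forall>y\<in>set b. x < y"
  shows "alt_cons x d (a @ b) = (-1) ^ length a * d (a @ x # b)"
proof -
  have "x \<notin> set (a @ b)"
    using a b by auto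
  moreover have "filter (\<lambda>y. y < x) (a @ b) = a"
    using a b by (force simp: filter_empty_conv intro!: filter_True)
  ultimately show ?thesis
    using a b by (simp add: alt_cons_def insort_mid)
qed

text \<open>The identity alt_cons x (delta d) + delta (alt_cons x d) = d on a sorted
  simplex not containing x; the terms of both coboundaries cancel pairwise.\<close>
lemma alt_cons_cobdry_notin:
  assumes a: "\<forall>y\<in>set a. y < x" and b: "\<forall>y\<in>set b. x < y"
  shows "alt_cons x (cobdry d) (a @ b) + cobdry (alt_cons x d) (a @ b) = d (a @ b)"
proof -
  let ?r = "length a"
  have fa: "\<forall>y\<in>set (face a k). y < x" for k
    using a set_face_sub by blast
  have fb: "\<forall>y\<in>set (face b i). x < y" for i
    using b set_face_sub by blast
  have sign: "(-1::int) ^ ?r * (-1) ^ ?r = 1"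
    by (simp flip: power_add)
  have lhs: "alt_cons x (cobdry d) (a @ b)
      = (-1) ^ ?r * (\<Sum>k<?r. (-1) ^ k * d (face a k @ x # b)) + d (a @ b)
        + (-1) ^ ?r * (\<Sum>i<length b. (-1) ^ (?r + Suc i) * d (a @ x # face b i))"
    unfolding alt_cons_mid[OF a b] cobdry_mid distrib_left
    using sign by (simp add: mult.assoc[symmetric])
  have before: "(-1) ^ ?r * (\<Sum>k<?r. (-1) ^ k * d (face a k @ x # b))
      + (\<Sum>k<?r. (-1) ^ k * alt_cons x d (face a k @ b)) = 0"
  proof (cases ?r)
    case (Suc m)
    have "(\<Sum>k<?r. (-1) ^ k * alt_cons x d (face a k @ b))
        = (\<Sum>k<?r. (-1) ^ k * ((-1) ^ m * d (face a k @ x # b)))"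
      using Suc by (intro sum.cong) (auto simp: alt_cons_mid[OF fa b] length_face)
    then show ?thesis
      using Suc by (simp add: sum_distrib_left algebra_simps sum_negf)
  qed simp
  have after: "(-1) ^ ?r * (\<Sum>i<length b. (-1) ^ (?r + Suc i) * d (a @ x # face b i))
      + (\<Sum>i<length b. (-1) ^ (?r + i) * alt_cons x d (a @ face b i)) = 0"
    by (simp add: alt_cons_mid[OF a fb] sum_distrib_left flip: sum.distrib)
  show ?thesis
    using lhs before after cobdry_append[of "alt_cons x d" a b] by linarith
qed

text \<open>The same identity on a sorted simplex containing x: only the face deleting x
  survives.\<close>
lemma alt_cons_cobdry_in:
  assumes a: "\<forall>y\<in>set a. y < x" and b: "\<forall>y\<in>set b. x < y"
  shows "alt_cons x (cobdry d) (a @ x # b) + cobdry (alt_cons x d) (a @ x # b) = d (a @ x # b)"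
proof -
  have "cobdry (alt_cons x d) (a @ x # b) = (-1) ^ length a * alt_cons x d (a @ b)"
    unfolding cobdry_mid by (simp add: alt_cons_def)
  also have "\<dots> = d (a @ x # b)"
    by (simp add: alt_cons_mid[OF a b] flip: power_add)
  finally show ?thesis
    by (simp add: alt_cons_def)
qed

lemma alt_cons_cobdry:
  assumes "sorted s" "distinct s"
  shows "alt_cons x (cobdry d) s + cobdry (alt_cons x d) s = d s"
proof (cases "x \<in> set s")
  case True
  then obtain a b where s: "s = a @ x # b"
    by (meson split_list)
  have "\<forall>y\<in>set a. y < x" "\<forall>y\<in>set b. x < y"
    using assms unfolding s by (auto simp: sorted_append order.strict_iff_order)
  then show ?thesis
    using alt_cons_cobdry_in s by simp
next
  case False
  define a where "a = takeWhile (\<lambda>y. y < x) s"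
  define b where "b = dropWhile (\<lambda>y. y < x) s"
  have s: "s = a @ b"
    by (simp add: a_def b_def)
  have A: "\<forall>y\<in>set a. y < x"
    by (auto simp: a_def dest: set_takeWhileD)
  have B: "\<forall>y\<in>set b. x < y"
  proof
    fix y
    assume y: "y \<in> set b"
    then obtain z zs where bz: "b = z # zs"
      by (cases b) auto
    have "\<not> z < x"
      using bz b_def by (metis dropWhile_eq_Cons_conv)
    moreover have "z \<le> y"
      using y bz assms(1) s by (auto simp: sorted_append)
    moreover have "y \<noteq> x"
      using y False s by auto
    ultimately show "x < y" by simp
  qed
  show ?thesis
    using alt_cons_cobdry_notin[OF A B] s by simp
qed

lemma alt_cobdry: "cobdry (alt d) t = alt (cobdry d) t"
proof (induction t arbitrary: d)
  case Nil
  then show ?case by (simp add: cobdry_def alt_def)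
next
  case (Cons x t)
  have "cobdry (alt d) (x # t) = alt d t - cobdry (\<lambda>u. alt d (x # u)) t"
    by (rule cobdry_cone)
  also have "(\<lambda>u. alt d (x # u)) = alt (alt_cons x d)"
    by (simp add: alt_Cons fun_eq_iff)
  also have "cobdry (alt (alt_cons x d)) t = alt (cobdry (alt_cons x d)) t"
    by (rule Cons.IH)
  also have "alt d t - alt (cobdry (alt_cons x d)) t = alt (alt_cons x (cobdry d)) t"
  proof (cases "distinct t")
    case True
    then have "alt_cons x (cobdry d) (sort t) + cobdry (alt_cons x d) (sort t) = d (sort t)"
      by (intro alt_cons_cobdry) simp_all
    then show ?thesis
      using True by (simp add: alt_def algebra_simps flip: distrib_left)
  qed (simp add: alt_def)
  also have "\<dots> = alt (cobdry d) (x # t)"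
    by (simp add: alt_Cons)
  finally show ?case .
qed

subsection \<open>A chain homotopy between alternation and the identity\<close>

text \<open>The homotopy operator lowers the degree by one.  On a simplex s of length m+1 it
  is defined by recursion on m, coning off from the least vertex of s.\<close>
fun alt_homotopy_n :: "nat \<Rightarrow> (nat list \<Rightarrow> int) \<Rightarrow> nat list \<Rightarrow> int" where
  "alt_homotopy_n 0 d s = 0"
| "alt_homotopy_n (Suc k) d s =
     d (Min (set s) # s) - alt (\<lambda>u. d (Min (set s) # u)) s
     - (\<Sum>j<length s. (-1) ^ j * alt_homotopy_n k (\<lambda>u. d (Min (set s) # u)) (face s j))"

definition alt_homotopy :: "(nat list \<Rightarrow> int) \<Rightarrow> nat list \<Rightarrow> int" where
  "alt_homotopy d s = alt_homotopy_n (length s - 1) d s"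

lemma alt_homotopy_n_diff:
  "alt_homotopy_n k (\<lambda>u. c u - d u) s = alt_homotopy_n k c s - alt_homotopy_n k d s"
proof (induction k arbitrary: c d s)
  case 0
  then show ?case by simp
next
  case (Suc k)
  show ?case
    by (simp add: alt_diff Suc.IH right_diff_distrib sum_subtractf)
qed

lemma alt_homotopy_n_local:
  assumes "\<forall>t. set t \<subseteq> set s \<and> length t = Suc (length s) \<longrightarrow> d t = 0"
  shows "alt_homotopy_n k d s = 0"
  using assms
proof (induction k arbitrary: d s)
  case 0
  then show ?case by simp
next
  case (Suc k)
  show ?case
  proof (cases "s = []")
    case True
    then show ?thesis by (simp add: alt_def)
  next
    case False
    let ?v = "Min (set s)"
    have v: "?v \<in> set s"
      using False by simp
    have cone: "d (?v # s) = 0"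
      using Suc.prems v by auto
    have alt_cone: "alt (\<lambda>u. d (?v # u)) s = 0"
      using Suc.prems v by (auto simp: alt_def)
    have faces: "alt_homotopy_n k (\<lambda>u. d (?v # u)) (face s j) = 0" if j: "j < length s" for j
    proof (rule Suc.IH, intro allI impI)
      fix t
      assume t: "set t \<subseteq> set (face s j) \<and> length t = Suc (length (face s j))"
      then have "set (?v # t) \<subseteq> set s"
        using v set_face_sub[of s j] by auto
      moreover have "length (?v # t) = Suc (length s)"
        using t j False by (simp add: length_face)
      ultimately show "d (?v # t) = 0"
        using Suc.prems by blast
    qed
    show ?thesis
      using cone alt_cone faces by simp
  qed
qed

lemma alt_homotopy_formula:
  assumes "length s = Suc m"
  shows "c s - alt c s = cobdry (alt_homotopy c) s + alt_homotopy (cobdry c) s"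
  using assms
proof (induction m arbitrary: c s)
  case 0
  then obtain w where s: "s = [w]"
    by (cases s) auto
  show ?case
    by (simp add: s alt_def alt_homotopy_def cobdry_face face_def)
next
  case (Suc m)
  let ?v = "Min (set s)"
  let ?H = "alt_homotopy_n m"
  define cv where "cv = (\<lambda>u. c (?v # u))"
  have cone: "(\<lambda>u. cobdry c (?v # u)) = (\<lambda>u. c u - cobdry cv u)"
    by (simp add: cobdry_cone cv_def fun_eq_iff)
  have lf: "length (face s j) = Suc m" if "j < length s" for j
    using Suc.prems that by (simp add: length_face)
  have H_cobdry: "alt_homotopy (cobdry c) s = cobdry c (?v # s) - alt (\<lambda>u. c u - cobdry cv u) s
     - (\<Sum>j<length s. (-1) ^ j * ?H (\<lambda>u. c u - cobdry cv u) (face s j))"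
    using Suc.prems by (simp add: alt_homotopy_def cone)
  have cobdry_H: "cobdry (alt_homotopy c) s = (\<Sum>j<length s. (-1) ^ j * ?H c (face s j))"
    unfolding cobdry_face alt_homotopy_def by (rule sum.cong) (auto simp: lf)
  have IH: "?H (cobdry cv) (face s j)
      = cv (face s j) - alt cv (face s j) - cobdry (alt_homotopy cv) (face s j)"
    if "j < length s" for j
    using Suc.IH[of "face s j" cv] lf[OF that]
    unfolding alt_homotopy_def[of "cobdry cv"] by simp
  have "(\<Sum>j<length s. (-1) ^ j * ?H (\<lambda>u. c u - cobdry cv u) (face s j))
     = (\<Sum>j<length s. (-1) ^ j * ?H c (face s j)
         - (-1) ^ j * (cv (face s j) - alt cv (face s j) - cobdry (alt_homotopy cv) (face s j)))"
    by (rule sum.cong) (auto simp: alt_homotopy_n_diff IH right_diff_distrib)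
  also have "\<dots> = (\<Sum>j<length s. (-1) ^ j * ?H c (face s j))
      - (cobdry cv s - cobdry (alt cv) s - cobdry (cobdry (alt_homotopy cv)) s)"
    by (simp add: sum_subtractf cobdry_face right_diff_distrib)
  finally have faces: "(\<Sum>j<length s. (-1) ^ j * ?H (\<lambda>u. c u - cobdry cv u) (face s j))
      = cobdry (alt_homotopy c) s - (cobdry cv s - cobdry (alt cv) s)"
    by (simp add: cobdry_cobdry cobdry_H)
  have "alt_homotopy (cobdry c) s = c s - cobdry cv s - alt c s + alt (cobdry cv) s
      - cobdry (alt_homotopy c) s + (cobdry cv s - cobdry (alt cv) s)"
    unfolding H_cobdry faces by (simp add: alt_diff cobdry_cone cv_def)
  then show ?case
    by (simp add: alt_cobdry)
qed

subsection \<open>Cochains on nerves of covers\<close>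

lemma nerve_simplex_map:
  assumes "refinement_map J W I U lam" "nerve_simplex J W k \<sigma>"
  shows "nerve_simplex I U k (map lam \<sigma>)"
proof -
  have "set (map lam \<sigma>) \<subseteq> I" and "(\<Inter>j\<in>set \<sigma>. W j) \<subseteq> (\<Inter>i\<in>set (map lam \<sigma>). U i)"
    using assms unfolding refinement_map_def nerve_simplex_def by auto
  then show ?thesis
    using assms(2) unfolding nerve_simplex_def by auto
qed

lemma nerve_simplex_sort: "nerve_simplex I U k (sort s) = nerve_simplex I U k s"
  by (simp add: nerve_simplex_def)

lemma refinement_map_trans:
  assumes "refinement_map K Z J W \<nu>" "refinement_map J W I U lam"
  shows "refinement_map K Z I U (lam \<circ> \<nu>)"
  using assms unfolding refinement_map_def by (metis comp_apply subset_trans)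

lemma cocycle_minus_alt:
  assumes coc: "is_cocycle I U k c" and s: "nerve_simplex I U k s"
  shows "c s - alt c s = cobdry (alt_homotopy c) s"
proof -
  have "alt_homotopy (cobdry c) s = 0"
    unfolding alt_homotopy_def
  proof (rule alt_homotopy_n_local, intro allI impI)
    fix t
    assume t: "set t \<subseteq> set s \<and> length t = Suc (length s)"
    then have "(\<Inter>i\<in>set s. U i) \<subseteq> (\<Inter>i\<in>set t. U i)"
      by blast
    then have "nerve_simplex I U (Suc k) t"
      using s t unfolding nerve_simplex_def by auto
    then show "cobdry c t = 0"
      using coc by (simp add: is_cocycle_def)
  qed
  moreover have "length s = Suc k"
    using s by (simp add: nerve_simplex_def)
  ultimately show ?thesis
    using alt_homotopy_formula[of s k c] by simp
qed

lemma is_cocycle_alt_pullback: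
  assumes coc: "is_cocycle I U k c" and ref: "refinement_map J W I U lam"
  shows "is_cocycle J W k (\<lambda>\<sigma>. alt c (map lam \<sigma>))"
  unfolding is_cocycle_def
proof (intro allI impI)
  fix \<sigma>
  assume "nerve_simplex J W (Suc k) \<sigma>"
  then have "nerve_simplex I U (Suc k) (sort (map lam \<sigma>))"
    using nerve_simplex_map[OF ref] nerve_simplex_sort by blast
  then have "cobdry c (sort (map lam \<sigma>)) = 0"
    using coc by (simp add: is_cocycle_def)
  then have "alt (cobdry c) (map lam \<sigma>) = 0"
    by (simp add: alt_def)
  then show "cobdry (\<lambda>\<sigma>. alt c (map lam \<sigma>)) \<sigma> = 0"
    by (simp add: cobdry_map[of "alt c"] alt_cobdry)
qed

text \<open>On a cover of order at most k+1 every alternating k-cochain is a cocycle: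
  each (k+1)-simplex of the nerve repeats a vertex.\<close>
lemma is_cocycle_alt_low_order:
  assumes cov: "fin_open_cover Y J W"
    and order: "\<And>y. y \<in> Y \<Longrightarrow> card {j\<in>J. y \<in> W j} \<le> Suc k"
  shows "is_cocycle J W k (\<lambda>\<sigma>. alt c (map lam \<sigma>))"
  unfolding is_cocycle_def
proof (intro allI impI)
  fix \<sigma>
  assume "nerve_simplex J W (Suc k) \<sigma>"
  then have len: "length \<sigma> = Suc (Suc k)" and sJ: "set \<sigma> \<subseteq> J"
    and ne: "(\<Inter>j\<in>set \<sigma>. W j) \<noteq> {}"
    by (auto simp: nerve_simplex_def)
  obtain y where y: "y \<in> (\<Inter>j\<in>set \<sigma>. W j)"
    using ne by auto
  obtain j0 where j0: "j0 \<in> set \<sigma>"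
    using len by (cases \<sigma>) auto
  then have "W j0 \<subseteq> Y"
    using sJ cov by (auto simp: fin_open_cover_def dest: openin_subset)
  then have "y \<in> Y"
    using y j0 by blast
  have "set \<sigma> \<subseteq> {j\<in>J. y \<in> W j}"
    using y sJ by auto
  moreover have "finite J"
    using cov by (simp add: fin_open_cover_def)
  ultimately have "card (set \<sigma>) \<le> Suc k"
    using order[OF \<open>y \<in> Y\<close>] card_mono[of "{j\<in>J. y \<in> W j}" "set \<sigma>"] by force
  then have "\<not> distinct \<sigma>"
    using len distinct_card by fastforce
  then have "\<not> distinct (map lam \<sigma>)"
    using distinct_map by blast
  then have "alt (cobdry c) (map lam \<sigma>) = 0"
    by (simp add: alt_def)
  then show "cobdry (\<lambda>\<sigma>. alt c (map lam \<sigma>)) \<sigma> = 0"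
    by (simp add: cobdry_map[of "alt c"] alt_cobdry)
qed

text \<open>Pulling a nonzero Cech class back to a refinement and alternating it gives a
  representative of the same, hence a nonzero, class (degree at least 1).\<close>
lemma cech_nonzero_class_alt_pullback:
  assumes cls: "cech_nonzero_class X I U k c" and k: "k \<ge> 1"
    and cov: "fin_open_cover X J W" and ref: "refinement_map J W I U lam"
  shows "cech_nonzero_class X J W k (\<lambda>\<sigma>. alt c (map lam \<sigma>))"
  unfolding cech_nonzero_class_def
proof (intro conjI allI impI notI)
  have coc: "is_cocycle I U k c"
    using cls by (simp add: cech_nonzero_class_def)
  show "fin_open_cover X J W"
    by (fact cov)
  show "is_cocycle J W k (\<lambda>\<sigma>. alt c (map lam \<sigma>))"
    using coc ref by (rule is_cocycle_alt_pullback)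
  fix K Z \<nu>
  assume KZ: "fin_open_cover X K Z \<and> refinement_map K Z J W \<nu>"
    and "is_coboundary K Z k (\<lambda>\<sigma>. alt c (map lam (map \<nu> \<sigma>)))"
  define \<theta> where "\<theta> = lam \<circ> \<nu>"
  obtain b where b: "\<And>\<sigma>. nerve_simplex K Z k \<sigma> \<Longrightarrow> cobdry b \<sigma> = alt c (map \<theta> \<sigma>)"
    using \<open>is_coboundary K Z k _\<close> k by (auto simp: is_coboundary_def \<theta>_def)
  have ref': "refinement_map K Z I U \<theta>"
    unfolding \<theta>_def using KZ ref by (blast intro: refinement_map_trans)
  have "cobdry (\<lambda>\<sigma>. b \<sigma> + alt_homotopy c (map \<theta> \<sigma>)) \<sigma> = c (map \<theta> \<sigma>)"
    if \<sigma>: "nerve_simplex K Z k \<sigma>" for \<sigma>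
  proof -
    have "cobdry (\<lambda>\<sigma>. b \<sigma> + alt_homotopy c (map \<theta> \<sigma>)) \<sigma>
        = alt c (map \<theta> \<sigma>) + cobdry (alt_homotopy c) (map \<theta> \<sigma>)"
      by (simp add: cobdry_add cobdry_map[of "alt_homotopy c"] b[OF \<sigma>])
    also have "\<dots> = c (map \<theta> \<sigma>)"
      using cocycle_minus_alt[OF coc nerve_simplex_map[OF ref' \<sigma>]] by simp
    finally show ?thesis .
  qed
  then have "is_coboundary K Z k (\<lambda>\<sigma>. c (map \<theta> \<sigma>))"
    using k unfolding is_coboundary_def by auto
  then show False
    using cls KZ ref' by (auto simp: cech_nonzero_class_def)
qed

text \<open>A nonzero class in positive degree lives on a nonempty cover (over the empty
  index set every cochain is a coboundary).\<close>
lemma cech_nonzero_class_index_nonempty: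
  assumes cls: "cech_nonzero_class X I U k c" and k: "k \<ge> 1"
  shows "I \<noteq> {}"
proof
  assume "I = {}"
  then have "is_coboundary I U k (\<lambda>\<sigma>. c (map id \<sigma>))"
    using k by (auto simp: is_coboundary_def nerve_simplex_def)
  moreover have "refinement_map I U I U id"
    by (simp add: refinement_map_def)
  ultimately show False
    using cls unfolding cech_nonzero_class_def by blast
qed

lemma fin_open_cover_preimage:
  assumes cov: "fin_open_cover Y J W" and f: "continuous_on X f" "f ` X \<subseteq> Y"
  shows "fin_open_cover X J (\<lambda>j. f -` W j \<inter> X)"
  unfolding fin_open_cover_def
proof (intro conjI ballI)
  show "finite J"
    using cov by (simp add: fin_open_cover_def)
  show "openin (top_of_set X) (f -` W j \<inter> X)" if "j \<in> J" for j
  proof -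
    have "openin (top_of_set Y) (W j)"
      using cov that by (simp add: fin_open_cover_def)
    then obtain T where T: "open T" "W j = Y \<inter> T"
      by (auto simp: openin_open)
    then have "f -` W j \<inter> X = X \<inter> f -` T"
      using f(2) by auto
    then show ?thesis
      using continuous_openin_preimage_gen[OF f(1) T(1)] by simp
  qed
  show "(\<Union>j\<in>J. f -` W j \<inter> X) = X"
    using cov f(2) unfolding fin_open_cover_def by blast
qed

lemma cech_induced_nonzero_of_refining_preimage:
  assumes cls: "cech_nonzero_class X I U n c" and n: "n \<ge> 1"
    and f: "continuous_on X f" "f ` X \<subseteq> Y"
    and covW: "fin_open_cover Y J W"
    and order: "\<And>y. y \<in> Y \<Longrightarrow> card {j\<in>J. y \<in> W j} \<le> Suc n"
    and ref: "refinement_map J (\<lambda>j. f -` W j \<inter> X) I U \<kappa>"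
  shows "cech_induced_nonzero X Y f n"
proof -
  have "fin_open_cover X J (\<lambda>j. f -` W j \<inter> X)"
    using covW f by (rule fin_open_cover_preimage)
  then have "cech_nonzero_class X J (\<lambda>j. f -` W j \<inter> X) n (\<lambda>\<sigma>. alt c (map \<kappa> \<sigma>))"
    using cls n ref by (intro cech_nonzero_class_alt_pullback)
  moreover have "is_cocycle J W n (\<lambda>\<sigma>. alt c (map \<kappa> \<sigma>))"
    using covW order by (rule is_cocycle_alt_low_order)
  ultimately show ?thesis
    unfolding cech_induced_nonzero_def using covW by blast
qed

subsection \<open>Metric lemmas\<close>

lemma lebesgue_number_fin_open_cover:
  assumes "compact X" and cov: "fin_open_cover X I U"
  obtains e where "e > 0" "\<And>x. x \<in> X \<Longrightarrow> \<exists>i\<in>I. ball x e \<inter> X \<subseteq> U i"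
proof -
  have "\<forall>i\<in>I. \<exists>T. open T \<and> U i = X \<inter> T"
    using cov by (auto simp: fin_open_cover_def openin_open)
  then obtain T where T: "\<And>i. i \<in> I \<Longrightarrow> open (T i) \<and> U i = X \<inter> T i"
    by metis
  have "X = (\<Union>i\<in>I. U i)"
    using cov by (simp add: fin_open_cover_def)
  then have cover: "X \<subseteq> \<Union>(T ` I)"
    using T by blast
  have "open G" if "G \<in> T ` I" for G
    using that T by blast
  then obtain e where "e > 0" and e: "\<And>x. x \<in> X \<Longrightarrow> \<exists>G\<in>T ` I. ball x e \<subseteq> G"
    using Heine_Borel_lemma[OF assms(1) cover] by blast
  have "\<exists>i\<in>I. ball x e \<inter> X \<subseteq> U i" if x: "x \<in> X" for x
  proof -
    obtain i where "i \<in> I" "ball x e \<subseteq> T i"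
      using e[OF x] by blast
    then show ?thesis
      using T by blast
  qed
  then show ?thesis
    using that \<open>e > 0\<close> by blast
qed

lemma small_set_in_cover_member:
  assumes leb: "\<And>x. x \<in> X \<Longrightarrow> \<exists>i\<in>I. ball x e \<inter> X \<subseteq> U i" and "I \<noteq> {}"
    and "S \<subseteq> X" and small: "\<And>x x'. x \<in> S \<Longrightarrow> x' \<in> S \<Longrightarrow> dist x x' < e"
  shows "\<exists>i\<in>I. S \<subseteq> U i"
proof (cases "S = {}")
  case False
  then obtain x where x: "x \<in> S"
    by auto
  then obtain i where "i \<in> I" "ball x e \<inter> X \<subseteq> U i"
    using leb \<open>S \<subseteq> X\<close> by blast
  moreover have "S \<subseteq> ball x e \<inter> X"
    using x small \<open>S \<subseteq> X\<close> by auto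
  ultimately show ?thesis
    by blast
qed (use \<open>I \<noteq> {}\<close> in blast)

lemma eps_mapping_fibre_small:
  assumes "compact X" and fe: "eps_mapping e X f"
    and x: "x \<in> X" "x' \<in> X" and eq: "f x = f x'"
  shows "dist x x' < e"
proof -
  let ?F = "f -` {f x} \<inter> X"
  have "bounded ?F"
    using compact_imp_bounded[OF assms(1)] by (rule bounded_subset) auto
  then have "dist x x' \<le> diameter ?F"
    using x eq by (intro diameter_bounded_bound) auto
  moreover have "diameter ?F < e"
    using fe x by (auto simp: eps_mapping_def)
  ultimately show ?thesis
    by simp
qed

text \<open>An e-mapping of a compactum is uniformly e-injective: images closer than some
  eta > 0 have preimages closer than e.  (Minimise the distance of images over the
  compact set of pairs at distance at least e.)\<close>
lemma eps_mapping_uniformly_injective: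
  assumes "compact X" and f: "continuous_on X f" and fe: "eps_mapping e X f"
  obtains \<eta> where "\<eta> > 0"
    "\<And>x x'. x \<in> X \<Longrightarrow> x' \<in> X \<Longrightarrow> dist (f x) (f x') < \<eta> \<Longrightarrow> dist x x' < e"
proof -
  define C where "C = (X \<times> X) \<inter> {p. e \<le> dist (fst p) (snd p)}"
  define g where "g = (\<lambda>p. dist (f (fst p)) (f (snd p)))"
  show ?thesis
  proof (cases "C = {}")
    case True
    show ?thesis
      by (rule that[of 1]) (use True in \<open>auto simp: C_def\<close>)
  next
    case False
    have C: "compact C"
      unfolding C_def
      by (intro compact_Int_closed compact_Times assms(1) closed_Collect_le continuous_intros)
    moreover have g: "continuous_on C g"
    proof -
      have "fst ` C \<subseteq> X" "snd ` C \<subseteq> X"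
        by (auto simp: C_def)
      then have "continuous_on C (\<lambda>p. f (fst p))" "continuous_on C (\<lambda>p. f (snd p))"
        by (auto intro!: continuous_on_compose2[OF f] continuous_intros)
      then show ?thesis
        unfolding g_def by (intro continuous_intros)
    qed
    ultimately obtain p0 where p0: "p0 \<in> C" and min: "\<And>q. q \<in> C \<Longrightarrow> g p0 \<le> g q"
      using continuous_attains_inf[OF C False g] by blast
    have "g p0 > 0"
    proof (rule ccontr)
      assume "\<not> g p0 > 0"
      then have "f (fst p0) = f (snd p0)"
        by (simp add: g_def)
      then have "dist (fst p0) (snd p0) < e"
        using p0 by (intro eps_mapping_fibre_small[OF assms(1) fe]) (auto simp: C_def)
      then show False
        using p0 by (simp add: C_def)
    qed
    then show ?thesis
    proof (rule that)
      fix x x'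
      assume "x \<in> X" "x' \<in> X" "dist (f x) (f x') < g p0"
      then have "(x, x') \<notin> C"
        using min[of "(x, x')"] by (auto simp: g_def)
      then show "dist x x' < e"
        using \<open>x \<in> X\<close> \<open>x' \<in> X\<close> by (auto simp: C_def)
    qed
  qed
qed

lemma small_fin_open_cover:
  assumes "compact Y" "\<eta> > 0"
  obtains I V where "fin_open_cover Y I V"
    "\<And>i y y'. i \<in> I \<Longrightarrow> y \<in> V i \<Longrightarrow> y' \<in> V i \<Longrightarrow> dist y y' < \<eta>"
proof -
  have "Y \<subseteq> (\<Union>y\<in>Y. ball y (\<eta>/2))"
    using assms(2) by auto
  then obtain D where D: "D \<subseteq> Y" "finite D" "Y \<subseteq> (\<Union>y\<in>D. ball y (\<eta>/2))"
    by (rule compactE_image[OF assms(1) open_ball])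
  obtain ys where ys: "set ys = D"
    using D(2) finite_list by blast
  define V where "V = (\<lambda>i. Y \<inter> ball (ys ! i) (\<eta>/2))"
  have "fin_open_cover Y {..<length ys} V"
    unfolding fin_open_cover_def
  proof (intro conjI ballI subset_antisym)
    show "openin (top_of_set Y) (V i)" for i
      by (simp add: V_def openin_open_Int)
    show "Y \<subseteq> (\<Union>i\<in>{..<length ys}. V i)"
    proof
      fix y
      assume y: "y \<in> Y"
      then obtain z where z: "z \<in> set ys" "y \<in> ball z (\<eta>/2)"
        using D(3) ys by auto
      then obtain i where "i < length ys" "ys ! i = z"
        by (auto simp: in_set_conv_nth)
      then show "y \<in> (\<Union>i\<in>{..<length ys}. V i)"
        using y z by (auto simp: V_def)
    qed
  qed (auto simp: V_def)
  moreover have "dist y y' < \<eta>" if "y \<in> V i" "y' \<in> V i" for i y y'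
    using that dist_triangle_half_r[of "ys ! i" y \<eta> y'] by (auto simp: V_def dist_commute)
  ultimately show ?thesis
    using that by blast
qed

lemma small_fin_open_cover_of_order:
  assumes "compact Y" "covdim_le Y n" "\<eta> > 0"
  obtains J W where "fin_open_cover Y J W"
    "\<And>j y y'. j \<in> J \<Longrightarrow> y \<in> W j \<Longrightarrow> y' \<in> W j \<Longrightarrow> dist y y' < \<eta>"
    "\<And>y. y \<in> Y \<Longrightarrow> card {j\<in>J. y \<in> W j} \<le> Suc n"
proof -
  obtain I V where covV: "fin_open_cover Y I V"
    and small: "\<And>i y y'. i \<in> I \<Longrightarrow> y \<in> V i \<Longrightarrow> y' \<in> V i \<Longrightarrow> dist y y' < \<eta>"
    using small_fin_open_cover[OF assms(1,3)] by blast
  then obtain J W lam where "fin_open_cover Y J W" and ref: "refinement_map J W I V lam"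
    and "\<And>y. y \<in> Y \<Longrightarrow> card {j\<in>J. y \<in> W j} \<le> Suc n"
    using assms(2) unfolding covdim_le_def by blast
  moreover have "dist y y' < \<eta>" if "j \<in> J" "y \<in> W j" "y' \<in> W j" for j y y'
    using ref that small unfolding refinement_map_def by blast
  ultimately show ?thesis
    using that by blast
qed

theorem theorem1p15:
  fixes X :: "'a::metric_space set" and Y :: "'b::metric_space set" and n :: nat
  assumes "compact X" and "compact Y" and "n \<ge> 1"
    and "covdim_eq X n" and "covdim_eq Y n"
    and "cech_nonzero X n"
  shows "\<exists>\<epsilon>>0. \<forall>f. continuous_on X f \<and> f ` X \<subseteq> Y \<and> eps_mapping \<epsilon> X f
            \<longrightarrow> cech_induced_nonzero X Y f n"
proof -
  obtain I U c where cls: "cech_nonzero_class X I U n c"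
    using assms(6) by (auto simp: cech_nonzero_def)
  then have covU: "fin_open_cover X I U"
    by (simp add: cech_nonzero_class_def)
  have "I \<noteq> {}"
    using cls assms(3) by (rule cech_nonzero_class_index_nonempty)
  obtain e where "e > 0" and leb: "\<And>x. x \<in> X \<Longrightarrow> \<exists>i\<in>I. ball x e \<inter> X \<subseteq> U i"
    using lebesgue_number_fin_open_cover[OF assms(1) covU] by blast
  have "cech_induced_nonzero X Y f n"
    if f: "continuous_on X f" "f ` X \<subseteq> Y" and fe: "eps_mapping e X f" for f
  proof -
    obtain \<eta> where "\<eta> > 0" and inj:
      "\<And>x x'. x \<in> X \<Longrightarrow> x' \<in> X \<Longrightarrow> dist (f x) (f x') < \<eta> \<Longrightarrow> dist x x' < e"
      using eps_mapping_uniformly_injective[OF assms(1) f(1) fe] by blast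
    obtain J W where covW: "fin_open_cover Y J W"
      and small: "\<And>j y y'. j \<in> J \<Longrightarrow> y \<in> W j \<Longrightarrow> y' \<in> W j \<Longrightarrow> dist y y' < \<eta>"
      and order: "\<And>y. y \<in> Y \<Longrightarrow> card {j\<in>J. y \<in> W j} \<le> Suc n"
      using small_fin_open_cover_of_order[OF assms(2) _ \<open>\<eta> > 0\<close>] assms(5)
      unfolding covdim_eq_def by blast
    have "\<exists>i\<in>I. f -` W j \<inter> X \<subseteq> U i" if "j \<in> J" for j
      using small_set_in_cover_member[OF leb \<open>I \<noteq> {}\<close>, of "f -` W j \<inter> X"]
        small[OF \<open>j \<in> J\<close>] inj by blast
    then obtain \<kappa> where "refinement_map J (\<lambda>j. f -` W j \<inter> X) I U \<kappa>"
      unfolding refinement_map_def by metis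
    then show ?thesis
      using cech_induced_nonzero_of_refining_preimage[OF cls assms(3) f covW order] by blast
  qed
  then show ?thesis
    using \<open>e > 0\<close> by blast
qed

end
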